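(* Let $P$ be a probability distribution on a set $\mathcal{X}$ and let $f,g:\mathcal{X}\to\mathbb{R}^d$ be square-integrable functions with respect to $P$. Then $$\mathbb{E}_{x,x'\sim P\ \text{i.i.d.}}\big[\|f(x)-g(x')\|_2^2\big]\ge\frac12\,\mathbb{E}_{x\sim P}\big[\|f(x)-g(x)\|_2^2\big].$$ *)

theory Defs
  imports "HOL-Probability.Probability"
begin

end

theory Submission
  imports Defs
begin

text \<open>Expanding the squares, twice the independent expectation minus the diagonal one equals
  \<open>E \<parallel>f + g\<parallel>\<^sup>2 - 4 (E f \<bullet> E g)\<close>. By Jensen, \<open>E \<parallel>f + g\<parallel>\<^sup>2 \<ge> \<parallel>E f + E g\<parallel>\<^sup>2\<close>,
  and \<open>\<parallel>a + b\<parallel>\<^sup>2 - 4 (a \<bullet> b) = \<parallel>a - b\<parallel>\<^sup>2 \<ge> 0\<close>.\<close>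

lemma norm_diff_square_eq:
  fixes u v :: "'a::real_inner"
  shows "(norm (u - v))\<^sup>2 = (norm u)\<^sup>2 + (norm v)\<^sup>2 - 2 * (u \<bullet> v)"
  by (simp add: power2_norm_eq_inner inner_diff inner_commute)

lemma norm_add_square_eq:
  fixes u v :: "'a::real_inner"
  shows "(norm (u + v))\<^sup>2 = (norm u)\<^sup>2 + (norm v)\<^sup>2 + 2 * (u \<bullet> v)"
  by (simp add: power2_norm_eq_inner inner_add inner_commute)

lemma (in finite_measure) integrable_of_norm_square_integrable:
  fixes f :: "'a \<Rightarrow> 'b::{banach, second_countable_topology}"
  assumes [measurable]: "f \<in> borel_measurable M"
    and "integrable M (\<lambda>x. (norm (f x))\<^sup>2)"
  shows "integrable M f"
proof -
  have "integrable M (\<lambda>x. norm (f x))"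
    by (rule square_integrable_imp_integrable) (use assms in auto)
  then show ?thesis
    by (simp add: integrable_norm_iff)
qed

lemma integrable_inner_of_norm_square_integrable:
  fixes f g :: "'a \<Rightarrow> 'b::{real_inner, banach, second_countable_topology}"
  assumes [measurable]: "f \<in> borel_measurable M" "g \<in> borel_measurable M"
    and "integrable M (\<lambda>x. (norm (f x))\<^sup>2)" "integrable M (\<lambda>x. (norm (g x))\<^sup>2)"
  shows "integrable M (\<lambda>x. f x \<bullet> g x)"
proof (rule Bochner_Integration.integrable_bound)
  show "integrable M (\<lambda>x. (norm (f x))\<^sup>2 + (norm (g x))\<^sup>2)"
    using assms(3,4) by simp
  have "\<bar>u \<bullet> v\<bar> \<le> (norm u)\<^sup>2 + (norm v)\<^sup>2" for u v :: 'b
  proof -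
    have "\<bar>u \<bullet> v\<bar> \<le> norm u * norm v"
      by (rule Cauchy_Schwarz_ineq2)
    also have "\<dots> \<le> 2 * norm u * norm v"
      by simp
    also have "\<dots> \<le> (norm u)\<^sup>2 + (norm v)\<^sup>2"
      by (rule sum_squares_bound)
    finally show ?thesis .
  qed
  then show "AE x in M. norm (f x \<bullet> g x) \<le> norm ((norm (f x))\<^sup>2 + (norm (g x))\<^sup>2)"
    by simp
qed simp

lemma (in prob_space) square_norm_integral_le:
  fixes h :: "'a \<Rightarrow> 'b::{banach, second_countable_topology}"
  assumes [measurable]: "h \<in> borel_measurable M"
    and "integrable M (\<lambda>x. (norm (h x))\<^sup>2)"
  shows "(norm (\<integral>x. h x \<partial>M))\<^sup>2 \<le> (\<integral>x. (norm (h x))\<^sup>2 \<partial>M)"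
proof -
  have "integrable M (\<lambda>x. norm (h x))"
    by (rule square_integrable_imp_integrable) (use assms in auto)
  then have "(\<integral>x. norm (h x) \<partial>M)\<^sup>2 \<le> (\<integral>x. (norm (h x))\<^sup>2 \<partial>M)"
    using variance_positive[of "\<lambda>x. norm (h x)"] variance_eq assms(2) by simp
  moreover have "(norm (\<integral>x. h x \<partial>M))\<^sup>2 \<le> (\<integral>x. norm (h x) \<partial>M)\<^sup>2"
    by (rule power_mono[OF integral_norm_bound]) simp
  ultimately show ?thesis
    by linarith
qed

lemma (in pair_prob_space) integrable_integral_comp_fst:
  fixes h :: "'a \<Rightarrow> 'c::{banach, second_countable_topology}"
  assumes "integrable M1 h"
  shows "integrable (M1 \<Otimes>\<^sub>M M2) (\<lambda>z. h (fst z))"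
    and "(\<integral>z. h (fst z) \<partial>(M1 \<Otimes>\<^sub>M M2)) = (\<integral>x. h x \<partial>M1)"
proof -
  show int: "integrable (M1 \<Otimes>\<^sub>M M2) (\<lambda>z. h (fst z))"
    by (rule Fubini_integrable) (use assms in \<open>auto simp: M2.prob_space\<close>)
  show "(\<integral>z. h (fst z) \<partial>(M1 \<Otimes>\<^sub>M M2)) = (\<integral>x. h x \<partial>M1)"
    using integral_fst'[OF int] by (simp add: M2.prob_space)
qed

lemma (in pair_prob_space) integrable_integral_comp_snd:
  fixes h :: "'b \<Rightarrow> 'c::{banach, second_countable_topology}"
  assumes "integrable M2 h"
  shows "integrable (M1 \<Otimes>\<^sub>M M2) (\<lambda>z. h (snd z))"
    and "(\<integral>z. h (snd z) \<partial>(M1 \<Otimes>\<^sub>M M2)) = (\<integral>y. h y \<partial>M2)"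
proof -
  show int: "integrable (M1 \<Otimes>\<^sub>M M2) (\<lambda>z. h (snd z))"
    by (rule Fubini_integrable) (use assms in \<open>auto simp: M1.prob_space\<close>)
  show "(\<integral>z. h (snd z) \<partial>(M1 \<Otimes>\<^sub>M M2)) = (\<integral>y. h y \<partial>M2)"
    using integral_fst'[OF int] by (simp add: M1.prob_space)
qed

lemma (in pair_prob_space) integrable_integral_inner_fst_snd:
  fixes f :: "'a \<Rightarrow> 'c::{real_inner, banach, second_countable_topology}" and g :: "'b \<Rightarrow> 'c"
  assumes f: "integrable M1 f" and g: "integrable M2 g"
  shows "integrable (M1 \<Otimes>\<^sub>M M2) (\<lambda>z. f (fst z) \<bullet> g (snd z))"
    and "(\<integral>z. f (fst z) \<bullet> g (snd z) \<partial>(M1 \<Otimes>\<^sub>M M2)) = (\<integral>x. f x \<partial>M1) \<bullet> (\<integral>y. g y \<partial>M2)"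
proof -
  have [measurable]: "f \<in> borel_measurable M1" "g \<in> borel_measurable M2"
    using f g by auto
  have "integrable M1 (\<lambda>x. \<integral>y. norm (f x \<bullet> g y) \<partial>M2)"
  proof (rule Bochner_Integration.integrable_bound)
    show "integrable M1 (\<lambda>x. norm (f x) * (\<integral>y. norm (g y) \<partial>M2))"
      using f by simp
    show "AE x in M1. norm (\<integral>y. norm (f x \<bullet> g y) \<partial>M2) \<le> norm (norm (f x) * (\<integral>y. norm (g y) \<partial>M2))"
    proof (rule AE_I2)
      fix x
      have "(\<integral>y. norm (f x \<bullet> g y) \<partial>M2) \<le> (\<integral>y. norm (f x) * norm (g y) \<partial>M2)"
        using g by (intro integral_mono) (auto simp: Cauchy_Schwarz_ineq2)
      then show "norm (\<integral>y. norm (f x \<bullet> g y) \<partial>M2) \<le> norm (norm (f x) * (\<integral>y. norm (g y) \<partial>M2))"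
        by (simp add: integral_nonneg_AE)
    qed
  qed measurable
  then show int: "integrable (M1 \<Otimes>\<^sub>M M2) (\<lambda>z. f (fst z) \<bullet> g (snd z))"
    by (intro Fubini_integrable) (use g in auto)
  show "(\<integral>z. f (fst z) \<bullet> g (snd z) \<partial>(M1 \<Otimes>\<^sub>M M2)) = (\<integral>x. f x \<partial>M1) \<bullet> (\<integral>y. g y \<partial>M2)"
    using integral_fst'[OF int] f g by simp
qed

lemma (in prob_space) independent_norm_diff_square_ge_half_diagonal:
  fixes f g :: "'a \<Rightarrow> 'b::{real_inner, banach, second_countable_topology}"
  assumes [measurable]: "f \<in> borel_measurable M" "g \<in> borel_measurable M"
    and f2: "integrable M (\<lambda>x. (norm (f x))\<^sup>2)" and g2: "integrable M (\<lambda>x. (norm (g x))\<^sup>2)"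
  shows "(1/2) * (\<integral>x. (norm (f x - g x))\<^sup>2 \<partial>M)
           \<le> (\<integral>z. (norm (f (fst z) - g (snd z)))\<^sup>2 \<partial>(M \<Otimes>\<^sub>M M))"
proof -
  have f: "integrable M f"
    by (rule integrable_of_norm_square_integrable[OF _ f2]) measurable
  have g: "integrable M g"
    by (rule integrable_of_norm_square_integrable[OF _ g2]) measurable
  have pair: "pair_prob_space M M"
    by unfold_locales
  have fg: "integrable M (\<lambda>x. f x \<bullet> g x)"
    using f2 g2 by (intro integrable_inner_of_norm_square_integrable) auto
  define A where "A = (\<integral>x. (norm (f x))\<^sup>2 \<partial>M)"
  define B where "B = (\<integral>x. (norm (g x))\<^sup>2 \<partial>M)"
  define C where "C = (\<integral>x. f x \<bullet> g x \<partial>M)"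
  define a where "a = (\<integral>x. f x \<partial>M)"
  define b where "b = (\<integral>x. g x \<partial>M)"
  have independent: "(\<integral>z. (norm (f (fst z) - g (snd z)))\<^sup>2 \<partial>(M \<Otimes>\<^sub>M M)) = A + B - 2 * (a \<bullet> b)"
    using pair_prob_space.integrable_integral_comp_fst[OF pair f2]
      pair_prob_space.integrable_integral_comp_snd[OF pair g2]
      pair_prob_space.integrable_integral_inner_fst_snd[OF pair f g]
    by (simp add: norm_diff_square_eq A_def B_def a_def b_def)
  have diagonal: "(\<integral>x. (norm (f x - g x))\<^sup>2 \<partial>M) = A + B - 2 * C"
    using f2 g2 fg by (simp add: norm_diff_square_eq A_def B_def C_def)
  have sum2: "integrable M (\<lambda>x. (norm (f x + g x))\<^sup>2)"
    using f2 g2 fg by (simp add: norm_add_square_eq)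
  have "(norm (a + b))\<^sup>2 = (norm (\<integral>x. f x + g x \<partial>M))\<^sup>2"
    using f g by (simp add: a_def b_def)
  also have "\<dots> \<le> (\<integral>x. (norm (f x + g x))\<^sup>2 \<partial>M)"
    using sum2 by (rule square_norm_integral_le[rotated]) measurable
  also have "\<dots> = A + B + 2 * C"
    using f2 g2 fg by (simp add: norm_add_square_eq A_def B_def C_def)
  finally have "(norm (a + b))\<^sup>2 \<le> A + B + 2 * C" .
  moreover have "4 * (a \<bullet> b) \<le> (norm (a + b))\<^sup>2"
    using zero_le_power2[of "norm (a - b)"] by (simp add: norm_add_square_eq norm_diff_square_eq)
  ultimately show ?thesis
    unfolding independent diagonal by argo
qed

theorem lemma4:
  fixes M :: "'a measure" and f g :: "'a \<Rightarrow> real ^ 'd"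
  assumes "prob_space M"
    and "f \<in> borel_measurable M" and "g \<in> borel_measurable M"
    and "integrable M (\<lambda>x. (norm (f x))\<^sup>2)"
    and "integrable M (\<lambda>x. (norm (g x))\<^sup>2)"
  shows "(\<integral>z. (norm (f (fst z) - g (snd z)))\<^sup>2 \<partial>(M \<Otimes>\<^sub>M M))
           \<ge> (1/2) * (\<integral>x. (norm (f x - g x))\<^sup>2 \<partial>M)"
  using prob_space.independent_norm_diff_square_ge_half_diagonal[OF assms] by simp

end
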